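(* Let $p$ be an odd prime, $a,m\in\mathbb Z_p$ with $m\not\equiv0\pmod p$ and $a\not\equiv0,-1\pmod p$, and put $A_k=\binom ak\binom{-1-a}k\binom{2k}k$. Then $$2a(a+1)\sum_{k=0}^{p-2}\frac{A_k}{m^k(k+1)^2}\equiv(m-4)\sum_{k=0}^{p-1}\frac{kA_k}{m^k}+2\sum_{k=0}^{p-1}\frac{A_k}{m^k}+(4a(a+1)-2)\sum_{k=0}^{p-2}\frac{A_k}{m^k(k+1)}\pmod{p^3}$$ and $$2a(a+1)\sum_{k=0}^{p-2}\frac{A_k}{m^k(k+1)^3}\equiv-m+\Big(2m-8-\frac{m-4}{a(a+1)}\Big)\sum_{k=0}^{p-1}\frac{kA_k}{m^k}+\Big(m-\frac2{a(a+1)}\Big)\sum_{k=0}^{p-1}\frac{A_k}{m^k}+\Big(8a(a+1)-2+\frac2{a(a+1)}\Big)\sum_{k=0}^{p-2}\frac{A_k}{m^k(k+1)}\pmod{p^3}.$$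
   Context: $\mathbb Z_p$ denotes the set of rational numbers whose denominator is not divisible by $p$; for $u,v\in\mathbb Z_p$, $u\equiv v\pmod{p^r}$ means $(u-v)/p^r\in\mathbb Z_p$. For $a$ rational, $\binom a0=1$ and $\binom ak=\frac{a(a-1)\cdots(a-k+1)}{k!}$ for $k\ge1$. *)

theory Defs
  imports Complex_Main "HOL-Computational_Algebra.Primes"
begin

text \<open>Z_p: rationals whose reduced denominator is not divisible by p.\<close>
definition p_integral :: "nat \<Rightarrow> rat \<Rightarrow> bool" where
  "p_integral p x \<longleftrightarrow> \<not> (int p dvd snd (quotient_of x))"

text \<open>u \<equiv> v (mod p^r) for u, v in Z_p: (u - v)/p^r in Z_p.\<close>
definition rcong :: "nat \<Rightarrow> nat \<Rightarrow> rat \<Rightarrow> rat \<Rightarrow> bool" where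
  "rcong p r u v \<longleftrightarrow> p_integral p ((u - v) / of_nat p ^ r)"

definition A_seq :: "rat \<Rightarrow> nat \<Rightarrow> rat" where
  "A_seq a k = (a gchoose k) * ((-1 - a) gchoose k) * of_nat (2*k choose k)"

end

theory Submission
  imports Defs "HOL-Number_Theory.Cong"
begin

text \<open>
  The terms satisfy the recurrence \<open>(k+1)^3 A_{k+1} = 2(2k+1)(k(k+1) - a(a+1)) A_k\<close>. Hence both
  congruences are, for every upper summation limit \<open>n\<close>, exact telescoping identities over \<open>\<rat>\<close>
  up to a boundary term that is a \<open>\<int>_p\<close>-multiple of \<open>A_n / m^n\<close>. For \<open>n = p - 1\<close> this term
  vanishes modulo \<open>p^3\<close>: writing \<open>a \<equiv> c (mod p)\<close> with \<open>0 < c < p - 1\<close>, the numerators of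
  \<open>binom a (p-1)\<close> and \<open>binom (-1-a) (p-1)\<close> contain the factors \<open>a - c\<close> and \<open>-1 - a - (p-1-c)\<close>,
  both divisible by \<open>p\<close>, over the \<open>p\<close>-unit \<open>(p-1)!\<close>, and \<open>p\<close> divides \<open>binom (2p-2) (p-1)\<close>.
\<close>

lemma gbinomial_Suc_rec:
  "of_nat (Suc k) * (x gchoose Suc k) = (x - of_nat k) * (x gchoose k)"
  by (simp only: gbinomial_absorption gbinomial_absorb_comp)

lemma central_binomial_Suc_rec:
  "Suc k * (2 * Suc k choose Suc k) = 2 * (2 * k + 1) * (2 * k choose k)"
proof -
  have "Suc k * (2 * Suc k choose Suc k) = 2 * Suc k * (2 * k + 1 choose k)"
    using Suc_times_binomial[of k "2 * k + 1"] by (simp del: binomial_Suc_Suc)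
  also have "(2 * k + 1 choose k) = (2 * k + 1 choose Suc k)"
    using binomial_symmetric[of k "2 * k + 1"] by simp
  also have "2 * Suc k * (2 * k + 1 choose Suc k) = 2 * (2 * k + 1) * (2 * k choose k)"
    by (metis Suc_eq_plus1 Suc_times_binomial_eq mult.assoc mult.commute)
  finally show ?thesis .
qed

lemma A_seq_Suc:
  "(of_nat k + 1) ^ 3 * A_seq a (Suc k)
     = 2 * (2 * of_nat k + 1) * (of_nat k * (of_nat k + 1) - a * (a + 1)) * A_seq a k"
proof -
  have "(of_nat k + 1) ^ 3 * A_seq a (Suc k)
     = (of_nat (Suc k) * (a gchoose Suc k)) * (of_nat (Suc k) * ((-1 - a) gchoose Suc k))
       * (of_nat (Suc k) * of_nat (2 * Suc k choose Suc k))"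
    by (simp add: A_seq_def power3_eq_cube algebra_simps)
  also have "\<dots> = 2 * (2 * of_nat k + 1) * (of_nat k * (of_nat k + 1) - a * (a + 1)) * A_seq a k"
    unfolding gbinomial_Suc_rec of_nat_mult[symmetric] central_binomial_Suc_rec by (simp add: A_seq_def algebra_simps)
  finally show ?thesis .
qed

lemma sum_div_Suc_square_eq:
  fixes t :: "nat \<Rightarrow> 'a::field_char_0"
  assumes rec: "\<And>k. m * (of_nat k + 1) ^ 3 * t (Suc k)
                   = 2 * (2 * of_nat k + 1) * (of_nat k * (of_nat k + 1) - b) * t k"
  shows "2 * b * (\<Sum>k<n. t k / (of_nat k + 1) ^ 2)
    = (m - 4) * (\<Sum>k\<le>n. of_nat k * t k) + 2 * (\<Sum>k\<le>n. t k)
      + (4 * b - 2) * (\<Sum>k<n. t k / (of_nat k + 1)) + (4 * of_nat n - 2) * t n"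
proof -
  define D where "D k = (4 * of_nat k - 2) * t k" for k
  have step: "2 * b * (t k / (of_nat k + 1) ^ 2)
      = (m - 4) * (of_nat (Suc k) * t (Suc k)) + 2 * t (Suc k)
        + (4 * b - 2) * (t k / (of_nat k + 1)) + (D (Suc k) - D k)" for k
  proof -
    \<comment> \<open>With \<open>k + 1\<close> abstracted to an atom \<open>y\<close>, \<open>field_simps\<close> can clear all denominators.\<close>
    define y where "y = (of_nat k + 1 :: 'a)"
    have y: "y \<noteq> 0" "of_nat (Suc k) = y" "of_nat k = y - 1"
      unfolding y_def by (simp_all add: add.commute) (metis of_nat_Suc of_nat_eq_0_iff nat.distinct(1))
    have "m * y ^ 3 * t (Suc k) = 2 * (2 * y - 1) * ((y - 1) * y - b) * t k"
      using rec[of k] unfolding y(3) by (simp add: y_def)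
    with y show ?thesis
      unfolding D_def y_def[symmetric] y(2,3) by (simp add: field_simps) algebra
  qed
  have "2 * b * (\<Sum>k<n. t k / (of_nat k + 1) ^ 2)
      = (m - 4) * (\<Sum>k<n. of_nat (Suc k) * t (Suc k)) + 2 * (\<Sum>k<n. t (Suc k))
        + (4 * b - 2) * (\<Sum>k<n. t k / (of_nat k + 1)) + (D n - D 0)"
    unfolding sum_distrib_left step by (simp only: sum.distrib sum_distrib_left sum_lessThan_telescope)
  also have "\<dots> = (m - 4) * (\<Sum>k\<le>n. of_nat k * t k) + 2 * (\<Sum>k\<le>n. t k)
      + (4 * b - 2) * (\<Sum>k<n. t k / (of_nat k + 1)) + (4 * of_nat n - 2) * t n"
    by (simp add: sum.atMost_shift D_def algebra_simps)
  finally show ?thesis .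
qed

lemma sum_div_Suc_cube_eq:
  fixes t :: "nat \<Rightarrow> 'a::field_char_0"
  assumes rec: "\<And>k. m * (of_nat k + 1) ^ 3 * t (Suc k)
                   = 2 * (2 * of_nat k + 1) * (of_nat k * (of_nat k + 1) - b) * t k"
    and "b \<noteq> 0"
  shows "2 * b * (\<Sum>k<n. t k / (of_nat k + 1) ^ 3)
    = - m * t 0 + (2 * m - 8 - (m - 4) / b) * (\<Sum>k\<le>n. of_nat k * t k)
      + (m - 2 / b) * (\<Sum>k\<le>n. t k) + (8 * b - 2 + 2 / b) * (\<Sum>k<n. t k / (of_nat k + 1))
      + (8 * of_nat n + (2 - 4 * of_nat n) / b) * t n"
proof -
  define E where "E k = (8 * of_nat k + (2 - 4 * of_nat k) / b) * t k" for k
  have step: "2 * b * (t k / (of_nat k + 1) ^ 3)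
      = (2 * m - 8 - (m - 4) / b) * (of_nat (Suc k) * t (Suc k)) + (m - 2 / b) * t (Suc k)
        + (8 * b - 2 + 2 / b) * (t k / (of_nat k + 1)) + (E (Suc k) - E k)" for k
  proof -
    define y where "y = (of_nat k + 1 :: 'a)"
    have y: "y \<noteq> 0" "of_nat (Suc k) = y" "of_nat k = y - 1"
      unfolding y_def by (simp_all add: add.commute) (metis of_nat_Suc of_nat_eq_0_iff nat.distinct(1))
    have "m * y ^ 3 * t (Suc k) = 2 * (2 * y - 1) * ((y - 1) * y - b) * t k"
      using rec[of k] unfolding y(3) by (simp add: y_def)
    with y \<open>b \<noteq> 0\<close> show ?thesis
      unfolding E_def y_def[symmetric] y(2,3) by (simp add: field_simps) algebra
  qed
  have "2 * b * (\<Sum>k<n. t k / (of_nat k + 1) ^ 3)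
      = (2 * m - 8 - (m - 4) / b) * (\<Sum>k<n. of_nat (Suc k) * t (Suc k)) + (m - 2 / b) * (\<Sum>k<n. t (Suc k))
        + (8 * b - 2 + 2 / b) * (\<Sum>k<n. t k / (of_nat k + 1)) + (E n - E 0)"
    unfolding sum_distrib_left step by (simp only: sum.distrib sum_distrib_left sum_lessThan_telescope)
  also have "\<dots> = - m * t 0 + (2 * m - 8 - (m - 4) / b) * (\<Sum>k\<le>n. of_nat k * t k)
      + (m - 2 / b) * (\<Sum>k\<le>n. t k) + (8 * b - 2 + 2 / b) * (\<Sum>k<n. t k / (of_nat k + 1))
      + (8 * of_nat n + (2 - 4 * of_nat n) / b) * t n"
    using \<open>b \<noteq> 0\<close> by (simp add: sum.atMost_shift E_def field_simps)
  finally show ?thesis .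
qed

lemma A_seq_div_power_Suc:
  fixes a m :: rat
  assumes "m \<noteq> 0"
  shows "m * (of_nat k + 1) ^ 3 * (A_seq a (Suc k) / m ^ Suc k)
    = 2 * (2 * of_nat k + 1) * (of_nat k * (of_nat k + 1) - a * (a + 1)) * (A_seq a k / m ^ k)"
  using A_seq_Suc[of k a] assms by (simp add: field_simps)

lemma A_seq_sum_div_Suc_square:
  fixes a m :: rat
  assumes "m \<noteq> 0"
  shows "2 * a * (a + 1) * (\<Sum>k<n. A_seq a k / (m ^ k * (of_nat k + 1) ^ 2))
    = (m - 4) * (\<Sum>k\<le>n. of_nat k * A_seq a k / m ^ k) + 2 * (\<Sum>k\<le>n. A_seq a k / m ^ k)
      + (4 * a * (a + 1) - 2) * (\<Sum>k<n. A_seq a k / (m ^ k * (of_nat k + 1)))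
      + (4 * of_nat n - 2) * (A_seq a n / m ^ n)"
  using sum_div_Suc_square_eq[OF A_seq_div_power_Suc[OF assms], where n = n] by (simp add: mult.assoc)

lemma A_seq_sum_div_Suc_cube:
  fixes a m :: rat
  assumes "m \<noteq> 0" and "a * (a + 1) \<noteq> 0"
  shows "2 * a * (a + 1) * (\<Sum>k<n. A_seq a k / (m ^ k * (of_nat k + 1) ^ 3))
    = - m + (2 * m - 8 - (m - 4) / (a * (a + 1))) * (\<Sum>k\<le>n. of_nat k * A_seq a k / m ^ k)
      + (m - 2 / (a * (a + 1))) * (\<Sum>k\<le>n. A_seq a k / m ^ k)
      + (8 * a * (a + 1) - 2 + 2 / (a * (a + 1))) * (\<Sum>k<n. A_seq a k / (m ^ k * (of_nat k + 1)))
      + (8 * of_nat n + (2 - 4 * of_nat n) / (a * (a + 1))) * (A_seq a n / m ^ n)"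
  using sum_div_Suc_cube_eq[OF A_seq_div_power_Suc[OF assms(1)] assms(2), where n = n]
  by (simp add: mult.assoc A_seq_def)

lemma p_integral_iff:
  assumes "prime p"
  shows "p_integral p x \<longleftrightarrow> (\<exists>u v. \<not> int p dvd v \<and> x = of_int u / of_int v)"
proof
  assume "p_integral p x"
  then show "\<exists>u v. \<not> int p dvd v \<and> x = of_int u / of_int v"
    unfolding p_integral_def by (metis prod.collapse quotient_of_div)
next
  assume "\<exists>u v. \<not> int p dvd v \<and> x = of_int u / of_int v"
  then obtain u v where v: "\<not> int p dvd v" and x: "x = of_int u / of_int v"
    by blast
  obtain n d where q: "quotient_of x = (n, d)"
    by (cases "quotient_of x")
  have "of_int n / of_int d = (of_int u / of_int v :: rat)"
    using quotient_of_div[OF q] x by simp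
  moreover have "v \<noteq> 0" "d \<noteq> 0"
    using v quotient_of_denom_pos[OF q] by auto
  ultimately have "rat_of_int (n * v) = rat_of_int (u * d)"
    by (simp add: frac_eq_eq)
  then have nv: "n * v = u * d"
    by (simp only: of_int_eq_iff)
  have pp: "prime (int p)"
    using assms by simp
  show "p_integral p x"
    unfolding p_integral_def q snd_conv
  proof
    assume "int p dvd d"
    moreover from this have "int p dvd n"
      using v nv prime_dvd_mult_iff[OF pp] by (metis dvd_mult)
    ultimately show False
      using quotient_of_coprime[OF q] pp by (meson coprime_common_divisor not_prime_unit)
  qed
qed

lemma p_integral_fraction:
  "prime p \<Longrightarrow> \<not> int p dvd v \<Longrightarrow> p_integral p (of_int u / of_int v)"
  using p_integral_iff by blast

lemma p_integralE:
  assumes "prime p" "p_integral p x"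
  obtains u v where "\<not> int p dvd v" "x = of_int u / of_int v"
  using p_integral_iff assms by blast

lemma p_integral_of_int: "prime p \<Longrightarrow> p_integral p (of_int k)"
  using p_integral_fraction[of p 1 k] prime_gt_1_nat[of p] by simp

lemma p_integral_of_nat: "prime p \<Longrightarrow> p_integral p (of_nat k)"
  using p_integral_of_int[of p "int k"] by simp

lemma p_integral_numeral: "prime p \<Longrightarrow> p_integral p (numeral k)"
  using p_integral_of_nat[of p "numeral k"] by simp

lemma p_integral_add:
  assumes p: "prime p" and "p_integral p x" "p_integral p y"
  shows "p_integral p (x + y)"
proof -
  obtain u v where v: "\<not> int p dvd v" "x = of_int u / of_int v"
    using p_integralE[OF p \<open>p_integral p x\<close>] .
  obtain u' v' where v': "\<not> int p dvd v'" "y = of_int u' / of_int v'"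
    using p_integralE[OF p \<open>p_integral p y\<close>] .
  have "v \<noteq> 0" "v' \<noteq> 0"
    using v v' by auto
  then have "x + y = of_int (u * v' + u' * v) / of_int (v * v')"
    using v v' by (simp add: field_simps)
  moreover have "\<not> int p dvd v * v'"
    using v v' p by (simp add: prime_dvd_mult_iff)
  ultimately show ?thesis
    using p_integral_fraction[OF p] by presburger
qed

lemma p_integral_mult:
  assumes p: "prime p" and "p_integral p x" "p_integral p y"
  shows "p_integral p (x * y)"
proof -
  obtain u v where v: "\<not> int p dvd v" "x = of_int u / of_int v"
    using p_integralE[OF p \<open>p_integral p x\<close>] .
  obtain u' v' where v': "\<not> int p dvd v'" "y = of_int u' / of_int v'"
    using p_integralE[OF p \<open>p_integral p y\<close>] .
  have "x * y = of_int (u * u') / of_int (v * v')"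
    using v v' by simp
  moreover have "\<not> int p dvd v * v'"
    using v v' p by (simp add: prime_dvd_mult_iff)
  ultimately show ?thesis
    using p_integral_fraction[OF p] by presburger
qed

lemma p_integral_minus:
  "prime p \<Longrightarrow> p_integral p x \<Longrightarrow> p_integral p (- x)"
  using p_integral_mult[of p "-1" x] p_integral_of_int[of p "-1"] by simp

lemma p_integral_diff:
  "prime p \<Longrightarrow> p_integral p x \<Longrightarrow> p_integral p y \<Longrightarrow> p_integral p (x - y)"
  using p_integral_add[of p x "- y"] p_integral_minus[of p y] by simp

lemma p_integral_power:
  "prime p \<Longrightarrow> p_integral p x \<Longrightarrow> p_integral p (x ^ n)"
  by (induction n) (auto intro: p_integral_mult p_integral_of_int[of p 1, simplified])

lemma p_integral_prod:
  assumes "prime p" "\<And>i. i \<in> S \<Longrightarrow> p_integral p (f i)"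
  shows "p_integral p (prod f S)"
  using assms(2)
  by (induction S rule: infinite_finite_induct)
     (simp_all add: p_integral_mult[OF \<open>prime p\<close>] p_integral_of_int[OF \<open>prime p\<close>, of 1, simplified])

lemma p_integral_one_divide:
  assumes p: "prime p" and x: "p_integral p x" and "\<not> rcong p 1 x 0"
  shows "p_integral p (1 / x)"
proof -
  obtain u v where v: "\<not> int p dvd v" "x = of_int u / of_int v"
    using p_integralE[OF p x] .
  have "\<not> int p dvd u"
  proof
    assume "int p dvd u"
    then obtain q where "u = int p * q" ..
    then have "(x - 0) / of_nat p ^ 1 = of_int q / of_int v"
      using v p by (simp add: prime_gt_0_nat)
    then show False
      using \<open>\<not> rcong p 1 x 0\<close> p_integral_fraction[OF p v(1)] unfolding rcong_def by simp
  qed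
  moreover have "1 / x = of_int v / of_int u"
    using v by simp
  ultimately show ?thesis
    using p_integral_fraction[OF p] by simp
qed

lemma nonzero_if_not_rcong_zero:
  "prime p \<Longrightarrow> \<not> rcong p r x 0 \<Longrightarrow> x \<noteq> 0"
  using p_integral_of_int[of p 0] by (auto simp: rcong_def)

lemma p_integral_residue:
  assumes p: "prime p" and x: "p_integral p x"
  obtains c where "c < p" "rcong p 1 x (of_nat c)"
proof -
  obtain u v where v: "\<not> int p dvd v" and uv: "x = of_int u / of_int v"
    using p_integralE[OF p x] .
  have "coprime v (int p)"
    using prime_imp_coprime[of "int p" v] v p by (simp add: coprime_commute)
  then obtain w where w: "[v * w = 1] (mod int p)"
    using cong_solve_coprime_int by blast
  define c where "c = nat ((u * w) mod int p)"
  have c: "c < p" "int c = (u * w) mod int p"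
    unfolding c_def using prime_gt_0_nat[OF p] by (simp_all add: nat_less_iff)
  have "[int c = u * w] (mod int p)"
    unfolding c(2) by simp
  then have "[int c * v = u * (v * w)] (mod int p)"
    using cong_scalar_right by (metis mult.assoc mult.commute)
  also have "[u * (v * w) = u * 1] (mod int p)"
    using w by (rule cong_scalar_left)
  finally obtain q where q: "u - int c * v = int p * q"
    by (metis cong_iff_dvd_diff cong_sym dvdE mult_1_right)
  have "(x - of_nat c) / of_nat p ^ 1 = of_int q / of_int v"
  proof -
    have "v \<noteq> 0"
      using v by auto
    then have "x - of_nat c = of_int (u - int c * v) / of_int v"
      using uv by (simp add: field_simps)
    then show ?thesis
      using q prime_gt_0_nat[OF p] by (simp add: field_simps)
  qed
  then show ?thesis
    using that c(1) p_integral_fraction[OF p v] unfolding rcong_def by simp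
qed

lemma prime_dvd_central_binomial:
  assumes "prime p" "n < p" "p \<le> 2 * n"
  shows "p dvd (2 * n choose n)"
proof -
  have "p dvd fact n * fact n * (2 * n choose n)"
    using binomial_fact_lemma[of n "2 * n"] prime_dvd_fact_iff[OF \<open>prime p\<close>, of "2 * n"] assms(3)
    by (simp add: mult_2)
  moreover have "\<not> p dvd fact n"
    using prime_dvd_fact_iff[OF \<open>prime p\<close>] \<open>n < p\<close> by simp
  ultimately show ?thesis
    using \<open>prime p\<close> by (simp add: prime_dvd_mult_iff)
qed

lemma p_integral_gchoose_div_prime:
  assumes p: "prime p" and x: "p_integral p x" and "rcong p 1 x (of_nat i)" "i < n" "n < p"
  shows "p_integral p ((x gchoose n) / of_nat p)"
proof -
  have "fact n * (x gchoose n) = (x - of_nat i) * (\<Prod>k \<in> {0..<n} - {i}. x - of_nat k)"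
    unfolding gbinomial_mult_fact using prod.remove[of "{0..<n}" i] \<open>i < n\<close> by simp
  then have eq: "(x gchoose n) / of_nat p
      = (x - of_nat i) / of_nat p * (\<Prod>k \<in> {0..<n} - {i}. x - of_nat k) * (1 / fact n)"
    by (simp add: eq_divide_eq mult.commute)
  have "p_integral p ((x - of_nat i) / of_nat p)"
    using \<open>rcong p 1 x (of_nat i)\<close> unfolding rcong_def by simp
  moreover have "p_integral p (1 / fact n)"
  proof -
    have "\<not> int p dvd fact n"
      using prime_dvd_fact_iff[OF p, of n] \<open>n < p\<close> by (metis int_dvd_int_iff of_nat_fact not_le)
    then show ?thesis
      using p_integral_fraction[OF p, of "fact n" 1] by simp
  qed
  ultimately show ?thesis
    unfolding eq by (intro p_integral_mult p_integral_prod p_integral_diff p_integral_of_nat p x)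
qed

lemma p_integral_A_seq_div_prime_cube:
  assumes p: "prime p" and a: "p_integral p a"
    and "\<not> rcong p 1 a 0" and "\<not> rcong p 1 a (-1)"
  shows "p_integral p (A_seq a (p - 1) / of_nat p ^ 3)"
proof -
  obtain c where "c < p" and c: "rcong p 1 a (of_nat c)"
    using p_integral_residue[OF p a] .
  have "c \<noteq> 0"
  proof
    assume "c = 0"
    with c \<open>\<not> rcong p 1 a 0\<close> show False by simp
  qed
  have "c \<noteq> p - 1"
  proof
    assume "c = p - 1"
    then have "(a - (-1)) / of_nat p ^ 1 = (a - of_nat c) / of_nat p ^ 1 + 1"
      using prime_gt_0_nat[OF p] by (simp add: of_nat_diff field_simps)
    then show False
      using c \<open>\<not> rcong p 1 a (-1)\<close> p_integral_add[OF p _ p_integral_of_int[OF p, of 1]]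
      unfolding rcong_def by simp
  qed
  have neg_residue: "rcong p 1 (-1 - a) (of_nat (p - 1 - c))"
  proof -
    have "(-1 - a - of_nat (p - 1 - c)) / of_nat p ^ 1 = - ((a - of_nat c) / of_nat p ^ 1) - 1"
      using \<open>c < p\<close> prime_gt_0_nat[OF p] by (simp add: of_nat_diff field_simps)
    then show ?thesis
      using c p_integral_diff[OF p p_integral_minus[OF p] p_integral_of_int[OF p, of 1]]
      unfolding rcong_def by simp
  qed
  have "p_integral p (-1 - a)"
    using p_integral_diff[OF p p_integral_of_int[OF p, of "-1"] a] by simp
  then have neg: "p_integral p (((-1 - a) gchoose (p - 1)) / of_nat p)"
    using p_integral_gchoose_div_prime[OF p _ neg_residue] \<open>c \<noteq> 0\<close> \<open>c < p\<close> by simp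
  have pos: "p_integral p ((a gchoose (p - 1)) / of_nat p)"
    using c \<open>c \<noteq> p - 1\<close> \<open>c < p\<close> by (intro p_integral_gchoose_div_prime[OF p a]) auto
  obtain C where "2 * (p - 1) choose (p - 1) = p * C"
    using prime_dvd_central_binomial[OF p, of "p - 1"] \<open>c \<noteq> 0\<close> \<open>c \<noteq> p - 1\<close> \<open>c < p\<close> by fastforce
  then have "A_seq a (p - 1) / of_nat p ^ 3
      = (a gchoose (p - 1)) / of_nat p * (((-1 - a) gchoose (p - 1)) / of_nat p) * of_nat C"
    using prime_gt_0_nat[OF p] unfolding A_seq_def by (simp add: power3_eq_cube)
  then show ?thesis
    using p_integral_mult[OF p p_integral_mult[OF p pos neg] p_integral_of_nat[OF p, of C]] by simp
qed

theorem theorem4p1: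
  fixes p :: nat and a m :: rat
  assumes "prime p" and "odd p"
    and "p_integral p a" and "p_integral p m"
    and "\<not> rcong p 1 m 0"
    and "\<not> rcong p 1 a 0" and "\<not> rcong p 1 a (-1)"
  shows
   "rcong p 3
      (2 * a * (a + 1) * (\<Sum>k=0..p-2. A_seq a k / (m ^ k * (of_nat k + 1) ^ 2)))
      ((m - 4) * (\<Sum>k=0..p-1. of_nat k * A_seq a k / m ^ k)
        + 2 * (\<Sum>k=0..p-1. A_seq a k / m ^ k)
        + (4 * a * (a + 1) - 2) * (\<Sum>k=0..p-2. A_seq a k / (m ^ k * (of_nat k + 1))))
    \<and>
    rcong p 3
      (2 * a * (a + 1) * (\<Sum>k=0..p-2. A_seq a k / (m ^ k * (of_nat k + 1) ^ 3)))
      (- m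
        + (2 * m - 8 - (m - 4) / (a * (a + 1))) * (\<Sum>k=0..p-1. of_nat k * A_seq a k / m ^ k)
        + (m - 2 / (a * (a + 1))) * (\<Sum>k=0..p-1. A_seq a k / m ^ k)
        + (8 * a * (a + 1) - 2 + 2 / (a * (a + 1)))
            * (\<Sum>k=0..p-2. A_seq a k / (m ^ k * (of_nat k + 1))))"
proof -
  note p = \<open>prime p\<close>
  define n where "n = p - 1"
  have "\<not> rcong p 1 (a + 1) 0"
    using \<open>\<not> rcong p 1 a (-1)\<close> by (simp add: rcong_def)
  then have "p_integral p (1 / a * (1 / (a + 1)))"
    using assms p_integral_add[OF p _ p_integral_of_int[OF p, of 1]]
    by (intro p_integral_mult p_integral_one_divide) simp_all
  then have divide_b: "p_integral p (c / (a * (a + 1)))" if "p_integral p c" for c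
    using p_integral_mult[OF p that \<open>p_integral p (1 / a * (1 / (a + 1)))\<close>] by simp
  have "m \<noteq> 0" "a * (a + 1) \<noteq> 0"
    using nonzero_if_not_rcong_zero[OF p] \<open>\<not> rcong p 1 m 0\<close> \<open>\<not> rcong p 1 a 0\<close>
      \<open>\<not> rcong p 1 (a + 1) 0\<close>
    by simp_all
  have boundary: "p_integral p (c * A_seq a n / (m ^ n * of_nat p ^ 3))" if "p_integral p c" for c
  proof -
    have "c * A_seq a n / (m ^ n * of_nat p ^ 3) = c * (A_seq a n / of_nat p ^ 3) * (1 / m) ^ n"
      by (simp add: power_one_over)
    then show ?thesis
      using p_integral_A_seq_div_prime_cube[OF p \<open>p_integral p a\<close> \<open>\<not> rcong p 1 a 0\<close> \<open>\<not> rcong p 1 a (-1)\<close>]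
        p_integral_one_divide[OF p \<open>p_integral p m\<close> \<open>\<not> rcong p 1 m 0\<close>] that
      unfolding n_def by (metis p_integral_mult p_integral_power p)
  qed
  have ranges: "{0..p-2} = {..<n}" "{0..p-1} = {..n}"
    using prime_ge_2_nat[OF p] unfolding n_def by auto
  show ?thesis
    unfolding rcong_def ranges A_seq_sum_div_Suc_square[OF \<open>m \<noteq> 0\<close>]
      A_seq_sum_div_Suc_cube[OF \<open>m \<noteq> 0\<close> \<open>a * (a + 1) \<noteq> 0\<close>]
    by (auto intro!: boundary divide_b p_integral_diff p_integral_add p_integral_mult
        p_integral_of_nat p_integral_numeral p)
qed

end
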